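(* Let $X\in\mathbb{R}^{n\times m}$ be a random matrix with independent centered entries satisfying $\mathbb{E}e^{\lambda X_{ij}}\le e^{\sigma^2(e^{|\lambda|}-1-|\lambda|)}$ for all $\lambda\in\mathbb{R}$, where $\sigma^2>0$. For nonempty $S\subset[n]$, $T\subset[m]$ let $$X_{S,T}=\max_{u\in\{\pm1\}^S}\max_{v\in\{\pm1\}^T}\sum_{i\in S}\sum_{j\in T}u_iX_{ij}v_j,\qquad \tau_{k,\ell}=k\log\frac{2en}{k}+\ell\log\frac{2em}{\ell},$$ and let $\beta(t,s)=e^{-s}\big(\frac{es}{s+t}\big)^{s+t}$ for $t\ge 0$, $s>0$. Then for any $t\ge1$, $$\Pr\Big(\bigcup_{S,T}\big\{-\log\beta(X_{S,T},|S||T|\sigma^2)\ge(1+t)\tau_{|S|,|T|}\big\}\Big)\le(e^2nm)^{-t},$$ where the union is over nonempty $S\subset[n]$ and $T\subset[m]$.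
   Context: $[n]=\{1,\dots,n\}$. (When $X_{S,T}<0$ the event $\{-\log\beta(X_{S,T},\cdot)\ge\cdot\}$ is understood with $\beta$ given by the same formula.) *)

theory Defs
  imports "HOL-Probability.Probability"
begin

definition XST :: "(nat \<Rightarrow> nat \<Rightarrow> real) \<Rightarrow> nat set \<Rightarrow> nat set \<Rightarrow> real" where
  "XST A S T = Max {(\<Sum>i\<in>S. \<Sum>j\<in>T. u i * A i j * v j) | u v.
       u \<in> S \<rightarrow>\<^sub>E {-1, 1} \<and> v \<in> T \<rightarrow>\<^sub>E {-1, 1}}"

definition tau :: "nat \<Rightarrow> nat \<Rightarrow> nat \<Rightarrow> nat \<Rightarrow> real" where
  "tau n m k l = real k * ln (2 * exp 1 * real n / real k) + real l * ln (2 * exp 1 * real m / real l)"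

definition beta :: "real \<Rightarrow> real \<Rightarrow> real" where
  "beta t s = exp (- s) * (exp 1 * s / (s + t)) powr (s + t)"

end

theory Submission
  imports Defs
begin

text \<open>For fixed \<open>S\<close>, \<open>T\<close> and sign vectors \<open>u\<close>, \<open>v\<close>, the form \<open>\<Sum> u\<^sub>i X\<^sub>i\<^sub>j v\<^sub>j\<close> is a sum
  of \<open>|S||T|\<close> independent variables with Poisson-type moment generating function, so
  Chernoff's bound with the optimal parameter \<open>\<lambda> = ln (1 + x/s)\<close> gives
  \<open>P(form \<ge> x) \<le> \<beta>(x, s)\<close>, and a union bound over the \<open>2\<^bsup>|S|+|T|\<^esup>\<close> sign vectors bounds
  the tail of \<open>X\<^sub>S\<^sub>,\<^sub>T\<close>. The event \<open>-log \<beta>(X\<^sub>S\<^sub>,\<^sub>T, s) \<ge> c\<close> is contained in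
  \<open>X\<^sub>S\<^sub>,\<^sub>T \<ge> x\<^sub>0\<close>, where \<open>x\<^sub>0\<close> is the least \<open>x \<ge> 0\<close> with \<open>-log \<beta>(x, s) \<ge> c\<close>, so it has
  probability at most \<open>2\<^bsup>|S|+|T|\<^esup> e\<^bsup>-c\<^esup>\<close>. Summing over \<open>S\<close> and \<open>T\<close> and grouping by
  cardinality, \<open>C(n,k) 2\<^sup>k (k/(2en))\<^bsup>(1+t)k\<^esup> \<le> (en)\<^bsup>-t\<^esup> 2\<^bsup>-k\<^esup>\<close> for \<open>t \<ge> 1\<close>; the geometric
  series in \<open>k\<close> sums to at most \<open>1\<close>, and the two dimensions multiply to \<open>(e\<^sup>2nm)\<^bsup>-t\<^esup>\<close>.\<close>

lemma power_div_fact_le_exp: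
  fixes x :: real
  assumes "0 \<le> x"
  shows "x ^ k / fact k \<le> exp x"
proof -
  have s: "(\<lambda>n. x ^ n /\<^sub>R fact n) sums exp x" by (rule exp_converges)
  have "(\<Sum>n\<in>{k}. x ^ n /\<^sub>R fact n) \<le> (\<Sum>n. x ^ n /\<^sub>R fact n)"
    by (rule sum_le_suminf) (use s assms in \<open>auto simp: sums_iff\<close>)
  then show ?thesis using s by (simp add: sums_iff divide_inverse mult.commute)
qed

lemma binomial_le_exp_pow:
  assumes "1 \<le> k"
  shows "real (n choose k) \<le> (exp 1 * real n / real k) ^ k"
proof -
  have "real (n choose k) * fact k \<le> real n ^ k"
    using binomial_fact_pow[of n k] by (metis of_nat_fact of_nat_le_iff of_nat_mult of_nat_power)
  then have "real (n choose k) \<le> (real n / real k) ^ k * (real k ^ k / fact k)"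
    using assms by (simp add: field_simps)
  also have "\<dots> \<le> (real n / real k) ^ k * exp 1 ^ k"
    using power_div_fact_le_exp[of "real k" k] by (intro mult_left_mono) (simp_all add: exp_of_nat_mult[symmetric])
  also have "\<dots> = (exp 1 * real n / real k) ^ k"
    by (simp add: power_mult_distrib[symmetric] mult_ac)
  finally show ?thesis .
qed

lemma power_ratio_le_inverse_exp_mult:
  assumes "1 \<le> k" "k \<le> n"
  shows "(real k / (exp 1 * real n)) ^ k \<le> 1 / (exp 1 * real n)"
proof -
  define q where "q = real k / (exp 1 * real n)"
  have q0: "0 \<le> q" and q1: "q \<le> exp (-1)"
    using assms by (simp_all add: q_def field_simps exp_minus)
  have "q ^ k = q * q ^ (k - 1)"
    using assms by (metis Suc_diff_le diff_Suc_1 power_Suc)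
  also have "\<dots> \<le> q * exp (-1) ^ (k - 1)"
    by (intro mult_left_mono power_mono q0 q1)
  also have "\<dots> = (real k / exp (real (k - 1))) / (exp 1 * real n)"
    by (simp add: q_def exp_of_nat_mult[symmetric] exp_minus field_simps)
  also have "\<dots> \<le> 1 / (exp 1 * real n)"
  proof -
    have "real k \<le> exp (real (k - 1))"
      using exp_ge_add_one_self[of "real (k - 1)"] assms by simp
    then show ?thesis using assms by (intro divide_right_mono) auto
  qed
  finally show ?thesis unfolding q_def .
qed

definition tau_weight :: "real \<Rightarrow> nat \<Rightarrow> nat \<Rightarrow> real" where
  "tau_weight t N k = 2 ^ k * exp (- (1 + t) * (real k * ln (2 * exp 1 * real N / real k)))"

lemma tau_weight_mult:
  "2 ^ k * 2 ^ l * exp (- ((1 + t) * tau n m k l)) = tau_weight t n k * tau_weight t m l"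
proof -
  have "exp (- ((1 + t) * tau n m k l))
      = exp (- (1 + t) * (real k * ln (2 * exp 1 * real n / real k)))
        * exp (- (1 + t) * (real l * ln (2 * exp 1 * real m / real l)))"
    by (simp add: tau_def ring_distribs mult_exp_exp)
  then show ?thesis
    unfolding tau_weight_def by (simp only: ac_simps)
qed

lemma tau_weight_eq_powr:
  assumes "1 \<le> k" "k \<le> n"
  shows "tau_weight t n k
           = 2 ^ k * (real k / (2 * exp 1 * real n)) ^ k * ((real k / (2 * exp 1 * real n)) ^ k) powr t"
proof -
  define q where "q = real k / (2 * exp 1 * real n)"
  have q0: "0 < q" using assms by (simp add: q_def)
  have "ln (2 * exp 1 * real n / real k) = - ln q"
    using assms by (simp add: q_def ln_div)
  then have "exp (- (1 + t) * (real k * ln (2 * exp 1 * real n / real k))) = (q ^ k) powr (1 + t)"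
    using q0 by (simp add: powr_def ln_realpow algebra_simps)
  then show ?thesis
    using q0 unfolding tau_weight_def q_def[symmetric] by (simp add: powr_add mult.assoc)
qed

lemma binomial_tau_weight_le:
  fixes t :: real
  assumes "1 \<le> k" "k \<le> n" "1 \<le> t"
  shows "real (n choose k) * tau_weight t n k \<le> (exp 1 * real n) powr (- t) * (1 / 2) ^ k"
proof -
  define q where "q = real k / (2 * exp 1 * real n)"
  have q0: "0 < q" using assms by (simp add: q_def)
  have q_pow: "q ^ k = (real k / (exp 1 * real n)) ^ k * (1 / 2) ^ k"
    by (simp add: q_def power_mult_distrib[symmetric] mult_ac)
  have "real (n choose k) * 2 ^ k * q ^ k \<le> (exp 1 * real n / real k) ^ k * (real k / (exp 1 * real n)) ^ k"
    unfolding q_pow using binomial_le_exp_pow[OF assms(1), of n]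
    by (simp add: power_one_over mult_right_mono)
  also have "\<dots> = 1"
    using assms by (simp add: power_mult_distrib[symmetric])
  finally have binomial_part: "real (n choose k) * 2 ^ k * q ^ k \<le> 1" .
  have "q ^ k \<le> 1 / (exp 1 * real n) * (1 / 2) ^ k"
    unfolding q_pow by (intro mult_right_mono power_ratio_le_inverse_exp_mult assms) simp
  then have "(q ^ k) powr t \<le> (1 / (exp 1 * real n) * (1 / 2) ^ k) powr t"
    using q0 assms by (intro powr_mono2) auto
  also have "\<dots> = (exp 1 * real n) powr (- t) * ((1 / 2) ^ k) powr t"
    using assms by (simp add: powr_mult powr_divide powr_minus_divide)
  also have "\<dots> \<le> (exp 1 * real n) powr (- t) * ((1 / 2) ^ k) powr 1"
    using assms by (intro mult_left_mono powr_mono') (auto simp: power_le_one)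
  finally have power_part: "(q ^ k) powr t \<le> (exp 1 * real n) powr (- t) * (1 / 2) ^ k"
    by simp
  have "real (n choose k) * tau_weight t n k = (real (n choose k) * 2 ^ k * q ^ k) * (q ^ k) powr t"
    unfolding tau_weight_eq_powr[OF assms(1,2)] q_def by (simp only: mult.assoc)
  also have "\<dots> \<le> 1 * ((exp 1 * real n) powr (- t) * (1 / 2) ^ k)"
    by (intro mult_mono binomial_part power_part) auto
  finally show ?thesis by simp
qed

lemma sum_nonempty_subsets_by_card:
  assumes "finite A"
  shows "(\<Sum>S\<in>{S. S \<noteq> {} \<and> S \<subseteq> A}. f (card S)) = (\<Sum>k=1..card A. of_nat (card A choose k) * f k)"
proof -
  define P where "P = {S. S \<noteq> {} \<and> S \<subseteq> A}"
  have fin: "finite P" unfolding P_def using assms by (simp add: finite_subset[of _ "Pow A"])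
  have img: "card ` P \<subseteq> {1..card A}"
    unfolding P_def using assms by (auto simp: card_mono Suc_le_eq card_gt_0_iff dest: finite_subset)
  have "(\<Sum>S\<in>P. f (card S)) = (\<Sum>k=1..card A. \<Sum>S\<in>{S \<in> P. card S = k}. f (card S))"
    by (rule sum.group[OF fin finite_atLeastAtMost img, symmetric])
  also have "\<dots> = (\<Sum>k=1..card A. of_nat (card A choose k) * f k)"
  proof (rule sum.cong [OF refl])
    fix k assume "k \<in> {1..card A}"
    then have "{S \<in> P. card S = k} = {S. S \<subseteq> A \<and> card S = k}"
      unfolding P_def by auto
    then show "(\<Sum>S\<in>{S \<in> P. card S = k}. f (card S)) = of_nat (card A choose k) * f k"
      using n_subsets[OF assms, of k] by simp
  qed
  finally show ?thesis unfolding P_def .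
qed

lemma sum_tau_weight_le:
  fixes t :: real
  assumes "1 \<le> t"
  shows "(\<Sum>S\<in>{S. S \<noteq> {} \<and> S \<subseteq> {1..n}}. tau_weight t n (card S)) \<le> (exp 1 * real n) powr (- t)"
proof -
  have geometric: "(\<Sum>k=1..n. (1 / 2 :: real) ^ k) = 1 - (1 / 2) ^ n"
    by (induction n) (auto simp: sum.atLeast1_atMost_eq)
  have "(\<Sum>S\<in>{S. S \<noteq> {} \<and> S \<subseteq> {1..n}}. tau_weight t n (card S))
      = (\<Sum>k=1..n. real (n choose k) * tau_weight t n k)"
    using sum_nonempty_subsets_by_card[of "{1..n}"] by simp
  also have "\<dots> \<le> (\<Sum>k=1..n. (exp 1 * real n) powr (- t) * (1 / 2) ^ k)"
    using assms by (intro sum_mono binomial_tau_weight_le) auto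
  also have "\<dots> = (exp 1 * real n) powr (- t) * (1 - (1 / 2) ^ n)"
    by (simp only: sum_distrib_left[symmetric] geometric)
  also have "\<dots> \<le> (exp 1 * real n) powr (- t)"
    by (intro mult_left_le) auto
  finally show ?thesis .
qed

definition bennett_rate :: "real \<Rightarrow> real \<Rightarrow> real" where
  "bennett_rate s x = (s + x) * ln (1 + x / s) - x"

lemma beta_eq_exp_bennett_rate:
  assumes "0 < s" "0 \<le> x"
  shows "beta x s = exp (- bennett_rate s x)"
proof -
  have "ln (exp 1 * s / (s + x)) = - ln (1 + x / s) + 1"
    using assms by (simp add: ln_div ln_mult field_simps)
  then have "(exp 1 * s / (s + x)) powr (s + x) = exp ((s + x) * (1 - ln (1 + x / s)))"
    using assms by (simp add: powr_def mult.commute)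
  then show ?thesis
    unfolding beta_def bennett_rate_def by (simp add: exp_add[symmetric] algebra_simps)
qed

lemma continuous_on_bennett_rate:
  assumes "0 < s"
  shows "continuous_on {0..} (bennett_rate s)"
proof -
  have pos: "0 < 1 + x / s" if "0 \<le> x" for x
    using assms that by (simp add: add_pos_nonneg)
  show ?thesis
    unfolding bennett_rate_def using assms by (intro continuous_intros) (auto dest: pos)
qed

text \<open>The tail bound is only assumed at each fixed level \<open>x\<close>; the least \<open>x \<ge> 0\<close> with
  \<open>c \<le> g x\<close>, which exists because \<open>g\<close> is continuous, turns it into a bound on the
  event \<open>c \<le> g Z\<close> without any monotonicity of \<open>g\<close>.\<close>
lemma (in finite_measure) measure_rate_ge_le_of_tail:
  fixes Z :: "'a \<Rightarrow> real" and g :: "real \<Rightarrow> real"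
  assumes Z: "Z \<in> borel_measurable M" and g: "continuous_on {0..} g"
    and tail: "\<And>x. 0 \<le> x \<Longrightarrow> measure M {\<omega>\<in>space M. x \<le> Z \<omega>} \<le> K * exp (- g x)"
  shows "measure M {\<omega>\<in>space M. 0 \<le> Z \<omega> \<and> c \<le> g (Z \<omega>)} \<le> K * exp (- c)"
proof -
  define A where "A = {x \<in> {0..}. c \<le> g x}"
  have "0 \<le> K * exp (- g 0)"
    using tail[of 0] measure_nonneg order_trans by blast
  then have K: "0 \<le> K"
    by (simp add: zero_le_mult_iff)
  show ?thesis
  proof (cases "A = {}")
    case True
    then have "{\<omega>\<in>space M. 0 \<le> Z \<omega> \<and> c \<le> g (Z \<omega>)} = {}"
      unfolding A_def by auto
    then show ?thesis using K by (simp only: measure_empty) simp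
  next
    case False
    have "closed A"
      unfolding A_def using g by (intro continuous_on_closed_Collect_le continuous_intros) auto
    moreover have bdd: "bdd_below A"
      unfolding A_def by (rule bdd_belowI[of _ 0]) auto
    ultimately have "Inf A \<in> A"
      using False closed_contains_Inf by blast
    then have x0: "0 \<le> Inf A" "c \<le> g (Inf A)"
      unfolding A_def by auto
    have "{\<omega>\<in>space M. 0 \<le> Z \<omega> \<and> c \<le> g (Z \<omega>)} \<subseteq> {\<omega>\<in>space M. Inf A \<le> Z \<omega>}"
      using cInf_lower[OF _ bdd] unfolding A_def by auto
    then have "measure M {\<omega>\<in>space M. 0 \<le> Z \<omega> \<and> c \<le> g (Z \<omega>)} \<le> measure M {\<omega>\<in>space M. Inf A \<le> Z \<omega>}"
      by (rule finite_measure_mono) (use Z in measurable)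
    also have "\<dots> \<le> K * exp (- g (Inf A))"
      by (rule tail[OF x0(1)])
    also have "\<dots> \<le> K * exp (- c)"
      using K x0(2) by (intro mult_left_mono) auto
    finally show ?thesis .
  qed
qed

lemma (in finite_measure) measure_le_sum_product_of_cover:
  assumes cover: "A \<subseteq> (\<Union>S\<in>P. \<Union>T\<in>Q. E S T)" and "finite P" "finite Q"
    and sets: "\<And>S T. S \<in> P \<Longrightarrow> T \<in> Q \<Longrightarrow> E S T \<in> sets M"
    and bound: "\<And>S T. S \<in> P \<Longrightarrow> T \<in> Q \<Longrightarrow> measure M (E S T) \<le> f S * g T"
  shows "measure M A \<le> (\<Sum>S\<in>P. f S) * (\<Sum>T\<in>Q. g T)"
proof -
  have "measure M A \<le> measure M (\<Union>S\<in>P. \<Union>T\<in>Q. E S T)"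
    using cover assms by (intro finite_measure_mono sets.finite_UN) auto
  also have "\<dots> \<le> (\<Sum>S\<in>P. measure M (\<Union>T\<in>Q. E S T))"
    using assms by (intro measure_UNION_le sets.finite_UN) auto
  also have "\<dots> \<le> (\<Sum>S\<in>P. \<Sum>T\<in>Q. measure M (E S T))"
    using assms by (intro sum_mono measure_UNION_le) auto
  also have "\<dots> \<le> (\<Sum>S\<in>P. \<Sum>T\<in>Q. f S * g T)"
    using bound by (intro sum_mono) auto
  finally show ?thesis by (simp add: sum_product)
qed

lemma XST_eq_Max_image:
  "XST A S T = Max ((\<lambda>(u, v). \<Sum>i\<in>S. \<Sum>j\<in>T. u i * A i j * v j) ` ((S \<rightarrow>\<^sub>E {-1, 1}) \<times> (T \<rightarrow>\<^sub>E {-1, 1})))"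
  unfolding XST_def by (rule arg_cong[where f = Max]) auto

lemma XST_attained:
  assumes "finite S" "finite T"
  obtains u v where "u \<in> S \<rightarrow>\<^sub>E {-1, 1}" "v \<in> T \<rightarrow>\<^sub>E {-1, 1}"
    and "XST A S T = (\<Sum>i\<in>S. \<Sum>j\<in>T. u i * A i j * v j)"
proof -
  have "XST A S T \<in> (\<lambda>(u, v). \<Sum>i\<in>S. \<Sum>j\<in>T. u i * A i j * v j) ` ((S \<rightarrow>\<^sub>E {-1, 1}) \<times> (T \<rightarrow>\<^sub>E {-1, 1}))"
    unfolding XST_eq_Max_image using assms by (intro Max_in) (auto simp: finite_PiE PiE_eq_empty_iff)
  then show ?thesis using that by auto
qed

lemma XST_nonneg:
  assumes "finite S" "finite T"
  shows "0 \<le> XST A S T"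
proof -
  define F where "F = (\<lambda>(u, v). \<Sum>i\<in>S. \<Sum>j\<in>T. u i * A i j * v j) ` ((S \<rightarrow>\<^sub>E {-1::real, 1}) \<times> (T \<rightarrow>\<^sub>E {-1, 1}))"
  define a where "a = (\<Sum>i\<in>S. \<Sum>j\<in>T. A i j)"
  have "finite F" unfolding F_def using assms by (simp add: finite_PiE)
  moreover have "a \<in> F"
    unfolding F_def a_def
    by (rule image_eqI[where x = "(\<lambda>i\<in>S. 1, \<lambda>j\<in>T. 1)"]) (auto intro: sum.cong)
  moreover have "- a \<in> F"
    unfolding F_def a_def
    by (rule image_eqI[where x = "(\<lambda>i\<in>S. -1, \<lambda>j\<in>T. 1)"]) (auto simp: sum_negf[symmetric] intro: sum.cong)
  ultimately have "a \<le> Max F" "- a \<le> Max F" by auto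
  then show ?thesis unfolding XST_eq_Max_image F_def[symmetric] by linarith
qed

lemma borel_measurable_XST:
  assumes "finite S" "finite T"
    and "\<And>i j. i \<in> S \<Longrightarrow> j \<in> T \<Longrightarrow> (\<lambda>\<omega>. X \<omega> i j) \<in> borel_measurable M"
  shows "(\<lambda>\<omega>. XST (X \<omega>) S T) \<in> borel_measurable M"
proof -
  define F where "F p \<omega> = (\<Sum>i\<in>S. \<Sum>j\<in>T. fst p i * X \<omega> i j * snd p j)" for p :: "(nat \<Rightarrow> real) \<times> (nat \<Rightarrow> real)" and \<omega>
  have "(\<lambda>\<omega>. XST (X \<omega>) S T) = (\<lambda>\<omega>. Max ((\<lambda>p. F p \<omega>) ` ((S \<rightarrow>\<^sub>E {-1, 1}) \<times> (T \<rightarrow>\<^sub>E {-1, 1}))))"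
    unfolding XST_eq_Max_image F_def by (simp add: case_prod_beta')
  also have "\<dots> \<in> borel_measurable M"
    using assms unfolding F_def
    by (intro borel_measurable_Max) (auto simp: finite_PiE intro!: borel_measurable_sum borel_measurable_times)
  finally show ?thesis .
qed

context prob_space
begin

lemma sum_tail_le_beta:
  fixes Y :: "'i \<Rightarrow> 'a \<Rightarrow> real" and \<sigma>2 x :: real
  assumes I: "finite I" "I \<noteq> {}" and "0 < \<sigma>2"
    and indep: "indep_vars (\<lambda>_. borel) Y I"
    and mgf_int: "\<And>i l. i \<in> I \<Longrightarrow> integrable M (\<lambda>\<omega>. exp (l * Y i \<omega>))"
    and mgf: "\<And>i l. i \<in> I \<Longrightarrow> 0 \<le> l \<Longrightarrow> (\<integral>\<omega>. exp (l * Y i \<omega>) \<partial>M) \<le> exp (\<sigma>2 * (exp l - 1 - l))"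
    and "0 \<le> x"
  shows "prob {\<omega>\<in>space M. x \<le> (\<Sum>i\<in>I. Y i \<omega>)} \<le> beta x (real (card I) * \<sigma>2)"
proof -
  define s where "s = real (card I) * \<sigma>2"
  have s_pos: "0 < s" using assms by (simp add: s_def card_gt_0_iff)
  define l where "l = ln (1 + x / s)"
  have l: "0 \<le> l" "exp l = 1 + x / s"
    using s_pos \<open>0 \<le> x\<close> by (simp_all add: l_def add_pos_nonneg)
  define Z where "Z i \<omega> = exp (l * Y i \<omega>)" for i \<omega>
  have exp_sum: "exp (l * (\<Sum>i\<in>I. Y i \<omega>)) = (\<Prod>i\<in>I. Z i \<omega>)" for \<omega>
    by (simp add: Z_def sum_distrib_left exp_sum I)
  have indep_Z: "indep_vars (\<lambda>_. borel) Z I"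
    unfolding Z_def by (rule indep_vars_compose2[OF indep, where Y = "\<lambda>_ y. exp (l * y)"]) measurable
  have int_Z: "integrable M (Z i)" if "i \<in> I" for i
    unfolding Z_def by (rule mgf_int[OF that])
  have integrable: "integrable M (\<lambda>\<omega>. exp (l * (\<Sum>i\<in>I. Y i \<omega>)))"
    unfolding exp_sum by (rule indep_vars_integrable[OF I(1) indep_Z int_Z])
  have "(\<integral>\<omega>. exp (l * (\<Sum>i\<in>I. Y i \<omega>)) \<partial>M) = (\<Prod>i\<in>I. \<integral>\<omega>. Z i \<omega> \<partial>M)"
    unfolding exp_sum by (rule indep_vars_lebesgue_integral[OF I(1) indep_Z int_Z])
  also have "\<dots> \<le> (\<Prod>i\<in>I. exp (\<sigma>2 * (exp l - 1 - l)))"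
    using mgf l(1) by (intro prod_mono) (simp add: Z_def)
  also have "\<dots> = exp (s * (exp l - 1 - l))"
    by (simp add: s_def exp_of_nat_mult[symmetric] mult.assoc)
  finally have mgf_sum: "(\<integral>\<omega>. exp (l * (\<Sum>i\<in>I. Y i \<omega>)) \<partial>M) \<le> exp (s * (exp l - 1 - l))" .
  have "prob {\<omega>\<in>space M. x \<le> (\<Sum>i\<in>I. Y i \<omega>)}
      \<le> prob {\<omega>\<in>space M. exp (l * x) \<le> exp (l * (\<Sum>i\<in>I. Y i \<omega>))}"
  proof (rule finite_measure_mono)
    have "(\<lambda>\<omega>. \<Sum>i\<in>I. Y i \<omega>) \<in> borel_measurable M"
      using indep unfolding indep_vars_def2 by (auto intro: borel_measurable_sum)
    then show "{\<omega>\<in>space M. exp (l * x) \<le> exp (l * (\<Sum>i\<in>I. Y i \<omega>))} \<in> events"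
      by measurable
  qed (use l(1) in \<open>auto intro: mult_left_mono\<close>)
  also have "\<dots> \<le> (\<integral>\<omega>. exp (l * (\<Sum>i\<in>I. Y i \<omega>)) \<partial>M) / exp (l * x)"
    by (rule integral_Markov_inequality_measure[OF integrable]) auto
  also have "\<dots> \<le> exp (s * (exp l - 1 - l)) / exp (l * x)"
    by (intro divide_right_mono mgf_sum) simp
  also have "\<dots> = exp (- bennett_rate s x)"
    using s_pos unfolding bennett_rate_def l(2) by (simp add: l_def exp_diff[symmetric] field_simps)
  also have "\<dots> = beta x (real (card I) * \<sigma>2)"
    unfolding s_def by (rule beta_eq_exp_bennett_rate[OF s_pos \<open>0 \<le> x\<close>, unfolded s_def, symmetric])
  finally show ?thesis .
qed

context
  fixes X :: "'a \<Rightarrow> nat \<Rightarrow> nat \<Rightarrow> real" and S T :: "nat set" and \<sigma>2 :: real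
  assumes ST: "finite S" "finite T" "S \<noteq> {}" "T \<noteq> {}" and \<sigma>2_pos: "0 < \<sigma>2"
    and indep: "indep_vars (\<lambda>_. borel) (\<lambda>p \<omega>. X \<omega> (fst p) (snd p)) (S \<times> T)"
    and mgf_int: "\<And>i j l. i \<in> S \<Longrightarrow> j \<in> T \<Longrightarrow> integrable M (\<lambda>\<omega>. exp (l * X \<omega> i j))"
    and mgf: "\<And>i j l. i \<in> S \<Longrightarrow> j \<in> T \<Longrightarrow>
       (\<integral>\<omega>. exp (l * X \<omega> i j) \<partial>M) \<le> exp (\<sigma>2 * (exp \<bar>l\<bar> - 1 - \<bar>l\<bar>))"
begin

lemma borel_measurable_entry:
  "i \<in> S \<Longrightarrow> j \<in> T \<Longrightarrow> (\<lambda>\<omega>. X \<omega> i j) \<in> borel_measurable M"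
  using indep unfolding indep_vars_def2 by auto

lemma sign_form_tail_le:
  assumes "u \<in> S \<rightarrow>\<^sub>E {-1, 1}" "v \<in> T \<rightarrow>\<^sub>E {-1, 1}" "0 \<le> x"
  shows "prob {\<omega>\<in>space M. x \<le> (\<Sum>i\<in>S. \<Sum>j\<in>T. u i * X \<omega> i j * v j)}
           \<le> beta x (real (card S) * real (card T) * \<sigma>2)"
proof -
  define c where "c p = u (fst p) * v (snd p)" for p
  have c: "\<bar>c p\<bar> = 1" if "p \<in> S \<times> T" for p
  proof -
    have "u (fst p) \<in> {-1, 1}" "v (snd p) \<in> {-1, 1}"
      using assms that by (auto simp: PiE_iff)
    then show ?thesis by (auto simp: c_def)
  qed
  define Y where "Y p \<omega> = c p * X \<omega> (fst p) (snd p)" for p \<omega>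
  have "(\<Sum>i\<in>S. \<Sum>j\<in>T. u i * X \<omega> i j * v j) = (\<Sum>p\<in>S \<times> T. Y p \<omega>)" for \<omega>
    unfolding Y_def c_def sum.cartesian_product by (rule sum.cong) (auto simp: mult_ac)
  moreover have "prob {\<omega>\<in>space M. x \<le> (\<Sum>p\<in>S \<times> T. Y p \<omega>)} \<le> beta x (real (card (S \<times> T)) * \<sigma>2)"
  proof (rule sum_tail_le_beta)
    show "indep_vars (\<lambda>_. borel) Y (S \<times> T)"
      unfolding Y_def by (rule indep_vars_compose2[OF indep, where Y = "\<lambda>p y. c p * y"]) measurable
    show "integrable M (\<lambda>\<omega>. exp (l * Y p \<omega>))" if "p \<in> S \<times> T" for p l
      using mgf_int[of "fst p" "snd p" "l * c p"] that by (auto simp: Y_def mult.assoc)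
    show "(\<integral>\<omega>. exp (l * Y p \<omega>) \<partial>M) \<le> exp (\<sigma>2 * (exp l - 1 - l))" if "p \<in> S \<times> T" "0 \<le> l" for p l
      using mgf[of "fst p" "snd p" "l * c p"] c[OF that(1)] that by (auto simp: Y_def mult.assoc abs_mult)
  qed (use ST \<sigma>2_pos \<open>0 \<le> x\<close> in auto)
  ultimately show ?thesis using ST by (simp add: card_cartesian_product)
qed

lemma XST_tail_le:
  assumes "0 \<le> x"
  shows "prob {\<omega>\<in>space M. x \<le> XST (X \<omega>) S T}
           \<le> 2 ^ card S * 2 ^ card T * beta x (real (card S) * real (card T) * \<sigma>2)"
proof -
  define signs where "signs = (S \<rightarrow>\<^sub>E {-1::real, 1}) \<times> (T \<rightarrow>\<^sub>E {-1::real, 1})"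
  define E where "E p = {\<omega>\<in>space M. x \<le> (\<Sum>i\<in>S. \<Sum>j\<in>T. fst p i * X \<omega> i j * snd p j)}" for p
  have E_events: "E p \<in> events" for p
  proof -
    have "(\<lambda>\<omega>. \<Sum>i\<in>S. \<Sum>j\<in>T. fst p i * X \<omega> i j * snd p j) \<in> borel_measurable M"
      using borel_measurable_entry by (auto intro!: borel_measurable_sum borel_measurable_times)
    then show ?thesis unfolding E_def by measurable
  qed
  have "{\<omega>\<in>space M. x \<le> XST (X \<omega>) S T} \<subseteq> (\<Union>p\<in>signs. E p)"
  proof
    fix \<omega> assume "\<omega> \<in> {\<omega>\<in>space M. x \<le> XST (X \<omega>) S T}"
    moreover obtain u v where "u \<in> S \<rightarrow>\<^sub>E {-1, 1}" "v \<in> T \<rightarrow>\<^sub>E {-1, 1}"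
      "XST (X \<omega>) S T = (\<Sum>i\<in>S. \<Sum>j\<in>T. u i * X \<omega> i j * v j)"
      using XST_attained[OF ST(1,2)] by blast
    ultimately show "\<omega> \<in> (\<Union>p\<in>signs. E p)"
      unfolding signs_def E_def by force
  qed
  then have "prob {\<omega>\<in>space M. x \<le> XST (X \<omega>) S T} \<le> prob (\<Union>p\<in>signs. E p)"
    by (rule finite_measure_mono) (auto simp: E_events signs_def finite_PiE ST)
  also have "\<dots> \<le> (\<Sum>p\<in>signs. prob (E p))"
    by (rule measure_UNION_le) (auto simp: signs_def finite_PiE ST E_events)
  also have "\<dots> \<le> (\<Sum>p\<in>signs. beta x (real (card S) * real (card T) * \<sigma>2))"
    using assms by (intro sum_mono) (auto simp: E_def signs_def intro: sign_form_tail_le)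
  also have "\<dots> = 2 ^ card S * 2 ^ card T * beta x (real (card S) * real (card T) * \<sigma>2)"
    using ST by (simp add: signs_def card_cartesian_product card_PiE numeral_2_eq_2)
  finally show ?thesis .
qed

lemma XST_rate_event_in_events:
  "{\<omega>\<in>space M. c \<le> - ln (beta (XST (X \<omega>) S T) (real (card S) * real (card T) * \<sigma>2))} \<in> events"
proof -
  have [measurable]: "(\<lambda>\<omega>. XST (X \<omega>) S T) \<in> borel_measurable M"
    using ST borel_measurable_entry by (intro borel_measurable_XST) auto
  show ?thesis unfolding beta_def by measurable
qed

lemma XST_rate_event_le:
  "prob {\<omega>\<in>space M. c \<le> - ln (beta (XST (X \<omega>) S T) (real (card S) * real (card T) * \<sigma>2))}
     \<le> 2 ^ card S * 2 ^ card T * exp (- c)"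
proof -
  define s where "s = real (card S) * real (card T) * \<sigma>2"
  have s_pos: "0 < s" using ST \<sigma>2_pos by (simp add: s_def card_gt_0_iff)
  have "{\<omega>\<in>space M. c \<le> - ln (beta (XST (X \<omega>) S T) s)}
      = {\<omega>\<in>space M. 0 \<le> XST (X \<omega>) S T \<and> c \<le> bennett_rate s (XST (X \<omega>) S T)}"
    using XST_nonneg[OF ST(1,2)] beta_eq_exp_bennett_rate[OF s_pos] by auto
  also have "prob \<dots> \<le> 2 ^ card S * 2 ^ card T * exp (- c)"
  proof (rule measure_rate_ge_le_of_tail)
    show "(\<lambda>\<omega>. XST (X \<omega>) S T) \<in> borel_measurable M"
      using ST borel_measurable_entry by (intro borel_measurable_XST) auto
    show "continuous_on {0..} (bennett_rate s)"
      by (rule continuous_on_bennett_rate[OF s_pos])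
    show "prob {\<omega>\<in>space M. x \<le> XST (X \<omega>) S T} \<le> 2 ^ card S * 2 ^ card T * exp (- bennett_rate s x)"
      if "0 \<le> x" for x
      using XST_tail_le[OF that] beta_eq_exp_bennett_rate[OF s_pos that] by (simp add: s_def)
  qed
  finally show ?thesis unfolding s_def .
qed

end

end

theorem lemmaB1:
  fixes M :: "'a measure" and X :: "'a \<Rightarrow> nat \<Rightarrow> nat \<Rightarrow> real"
    and n m :: nat and \<sigma>2 t :: real
  assumes "prob_space M"
    and "n \<ge> 1" and "m \<ge> 1"
    and "\<sigma>2 > 0"
    and indep: "prob_space.indep_vars M (\<lambda>_. borel) (\<lambda>p \<omega>. X \<omega> (fst p) (snd p)) ({1..n} \<times> {1..m})"
    and integ: "\<And>i j. i \<in> {1..n} \<Longrightarrow> j \<in> {1..m} \<Longrightarrow> integrable M (\<lambda>\<omega>. X \<omega> i j)"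
    and centered: "\<And>i j. i \<in> {1..n} \<Longrightarrow> j \<in> {1..m} \<Longrightarrow> (\<integral>\<omega>. X \<omega> i j \<partial>M) = 0"
    and mgf_int: "\<And>i j l. i \<in> {1..n} \<Longrightarrow> j \<in> {1..m} \<Longrightarrow> integrable M (\<lambda>\<omega>. exp (l * X \<omega> i j))"
    and mgf: "\<And>i j l. i \<in> {1..n} \<Longrightarrow> j \<in> {1..m} \<Longrightarrow>
       (\<integral>\<omega>. exp (l * X \<omega> i j) \<partial>M) \<le> exp (\<sigma>2 * (exp \<bar>l\<bar> - 1 - \<bar>l\<bar>))"
    and "t \<ge> 1"
  shows "measure M {\<omega> \<in> space M. \<exists>S T. S \<noteq> {} \<and> S \<subseteq> {1..n} \<and> T \<noteq> {} \<and> T \<subseteq> {1..m} \<and>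
            - ln (beta (XST (X \<omega>) S T) (real (card S) * real (card T) * \<sigma>2))
              \<ge> (1 + t) * tau n m (card S) (card T)}
         \<le> (exp 2 * real n * real m) powr (- t)"
proof -
  interpret prob_space M by fact
  define P where "P = {S. S \<noteq> {} \<and> S \<subseteq> {1..n}}"
  define Q where "Q = {T. T \<noteq> {} \<and> T \<subseteq> {1..m}}"
  define E where "E S T = {\<omega>\<in>space M. (1 + t) * tau n m (card S) (card T)
      \<le> - ln (beta (XST (X \<omega>) S T) (real (card S) * real (card T) * \<sigma>2))}" for S T
  have hyps: "finite S" "finite T" "S \<noteq> {}" "T \<noteq> {}" "S \<subseteq> {1..n}" "T \<subseteq> {1..m}"
    "indep_vars (\<lambda>_. borel) (\<lambda>p \<omega>. X \<omega> (fst p) (snd p)) (S \<times> T)" if "S \<in> P" "T \<in> Q" for S T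
    using that indep_vars_subset[OF indep, of "S \<times> T"] unfolding P_def Q_def by (auto intro: finite_subset)
  have "prob {\<omega> \<in> space M. \<exists>S T. S \<noteq> {} \<and> S \<subseteq> {1..n} \<and> T \<noteq> {} \<and> T \<subseteq> {1..m} \<and>
            - ln (beta (XST (X \<omega>) S T) (real (card S) * real (card T) * \<sigma>2))
              \<ge> (1 + t) * tau n m (card S) (card T)}
      \<le> (\<Sum>S\<in>P. tau_weight t n (card S)) * (\<Sum>T\<in>Q. tau_weight t m (card T))"
  proof (rule measure_le_sum_product_of_cover)
    show "E S T \<in> events" if "S \<in> P" "T \<in> Q" for S T
      unfolding E_def using hyps[OF that] \<open>\<sigma>2 > 0\<close>
      by (intro XST_rate_event_in_events) (auto intro!: mgf_int mgf)
    show "prob (E S T) \<le> tau_weight t n (card S) * tau_weight t m (card T)" if "S \<in> P" "T \<in> Q" for S T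
      unfolding E_def tau_weight_mult[symmetric] using hyps[OF that] \<open>\<sigma>2 > 0\<close>
      by (intro XST_rate_event_le) (auto intro!: mgf_int mgf)
  qed (unfold P_def Q_def E_def, blast, simp_all add: finite_subset[of _ "Pow _"])
  also have "\<dots> \<le> (exp 1 * real n) powr (- t) * (exp 1 * real m) powr (- t)"
    unfolding P_def Q_def using \<open>t \<ge> 1\<close>
    by (intro mult_mono sum_tau_weight_le sum_nonneg) (auto simp: tau_weight_def)
  also have "\<dots> = (exp 2 * real n * real m) powr (- t)"
    by (simp add: powr_mult[symmetric] mult_exp_exp mult_ac)
  finally show ?thesis .
qed

end
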